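(* For $\theta\in(-\pi,\pi]$ let $U(\theta)=R\sigma^+R^\dagger$ with $R=e^{-i\theta\sigma^y/2}$ (so $U(\theta)$ annihilates the pure state with Bloch vector $(\sin\theta,0,\cos\theta)$), and for a probability density $p$ on $(-\pi,\pi]$ consider the qubit Lindblad equation $\partial_t\rho=\int p(\theta)\,\mathcal D(U(\theta))\rho\,d\theta$, with stationary state $\rho_\oplus$ and fidelity $F_\infty=\langle\uparrow|\rho_\oplus|\uparrow\rangle$ with $|\uparrow\rangle$. (i) If $p$ is uniform on $[-\tilde\theta,\tilde\theta]$ with $0<\tilde\theta\le\pi$, then $F_\infty=\tfrac12+\tfrac{4\sin\tilde\theta}{6\tilde\theta+\sin2\tilde\theta}=1-\tfrac{\tilde\theta^4}{80}+O(\tilde\theta^6)$ as $\tilde\theta\to0$. (ii) If $p(\theta)=\frac{e^{\sigma^{-2}\cos\theta}}{2\pi I_0(\sigma^{-2})}$ (von Mises) with $\sigma>0$, then $F_\infty=\tfrac12+\Big(\tfrac{2I_0(\sigma^{-2})}{I_1(\sigma^{-2})}-\sigma^2\Big)^{-1}=1-\tfrac{3}{16}\sigma^4+O(\sigma^6)$ as $\sigma\to0$. In both cases the off-diagonal entry of $\rho_\oplus$ in the basis $\{|\uparrow\rangle,|\downarrow\rangle\}$ vanishes.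
   Context: $\sigma^+=|\uparrow\rangle\langle\downarrow|$; $\mathcal D(L)\rho:=L\rho L^\dagger-\tfrac12\{L^\dagger L,\rho\}$; $I_\nu$ denotes the modified Bessel function of the first kind of order $\nu$. *)

theory Defs
  imports "HOL-Analysis.Analysis" "HOL-Library.Landau_Symbols"
begin

text \<open>Qubit operators as 2x2 complex matrices; index 1 = up, index 2 = down.\<close>

type_synonym qop = "complex^2^2"

definition adj :: "qop \<Rightarrow> qop" where
  "adj A = (\<chi> i j. cnj (A $ j $ i))"

definition sigma_plus :: qop where
  "sigma_plus = (\<chi> i j. if i = 1 \<and> j = 2 then 1 else 0)"

definition sigma_y :: qop where
  "sigma_y = (\<chi> i j. if i = 1 \<and> j = 2 then - \<i> else if i = 2 \<and> j = 1 then \<i> else 0)"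

text \<open>R(theta) = exp(-i theta sigma_y / 2) = cos(theta/2) Id - i sin(theta/2) sigma_y
  (since sigma_y squared is the identity).\<close>
definition Rot :: "real \<Rightarrow> qop" where
  "Rot \<theta> = (\<chi> i j. complex_of_real (cos (\<theta>/2)) * (mat 1 :: qop) $ i $ j
                   + (- \<i> * complex_of_real (sin (\<theta>/2))) * sigma_y $ i $ j)"

definition Uop :: "real \<Rightarrow> qop" where
  "Uop \<theta> = Rot \<theta> ** sigma_plus ** adj (Rot \<theta>)"

definition dissipator :: "qop \<Rightarrow> qop \<Rightarrow> qop" where
  "dissipator L \<rho> = L ** \<rho> ** adj L - (1/2::real) *\<^sub>R (adj L ** L ** \<rho> + \<rho> ** adj L ** L)"

definition lindblad :: "(real \<Rightarrow> real) \<Rightarrow> qop \<Rightarrow> qop" where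
  "lindblad p \<rho> = integral {-pi..pi} (\<lambda>\<theta>. p \<theta> *\<^sub>R dissipator (Uop \<theta>) \<rho>)"

definition density_matrix :: "qop \<Rightarrow> bool" where
  "density_matrix \<rho> \<longleftrightarrow> adj \<rho> = \<rho>
     \<and> (\<forall>v::complex^2. 0 \<le> Re (\<Sum>i\<in>UNIV. cnj (v $ i) * (\<rho> *v v) $ i))
     \<and> \<rho> $ 1 $ 1 + \<rho> $ 2 $ 2 = 1"

definition stationary_state :: "(real \<Rightarrow> real) \<Rightarrow> qop \<Rightarrow> bool" where
  "stationary_state p \<rho> \<longleftrightarrow> density_matrix \<rho> \<and> lindblad p \<rho> = 0"

definition bessel_I :: "nat \<Rightarrow> real \<Rightarrow> real" where
  "bessel_I n x = (\<Sum>k. (x/2) ^ (2*k+n) / (fact k * fact (k+n)))"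

definition uniform_density :: "real \<Rightarrow> real \<Rightarrow> real" where
  "uniform_density t \<theta> = (if -t \<le> \<theta> \<and> \<theta> \<le> t then 1 / (2*t) else 0)"

definition von_mises_density :: "real \<Rightarrow> real \<Rightarrow> real" where
  "von_mises_density s \<theta> = exp (cos \<theta> / s^2) / (2*pi * bessel_I 0 (1 / s^2))"

end

theory Submission
  imports Defs "HOL-Real_Asymp.Real_Asymp"
begin

text \<open>With c = cos \<theta> and s = sin \<theta>, the dissipator D(U(\<theta>)) is a polynomial of degree two in
  (c, s). If the sin and sin-cos moments of p vanish, the generator is determined by the moments
  A0, A1, A2 of 1, c, c^2 against p, and the linear equations for its kernel show that the unique
  stationary state is diagonal with up-up entry 1/2 + A1 / (A0 + A2). For the von Mises density with k = 1 / \<sigma>^2 they are J0, J1 and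
  J0 - J1 / k (integration by parts), where J0 = 2\<pi> I0(k) and J1 = 2\<pi> I1(k) follow by integrating
  the exponential series of e^(k cos \<theta>) termwise against the Wallis integrals of cos^n.
  For the expansion as \<sigma> \<rightarrow> 0, J0 and J1 are rewritten through the moments
  m_j = \<integral> (1 - cos \<theta>)^j e^(-k (1 - cos \<theta>)), which satisfy a three-term recurrence; eliminating m_2
  expresses the error exactly through m_0 \<ge> \<sigma> and m_3 = O(\<sigma>^7).\<close>

section \<open>The dissipator of \<open>U(\<theta>)\<close>\<close>

lemma qop_eq_iff:
  fixes A B :: qop
  shows "A = B \<longleftrightarrow> A$1$1 = B$1$1 \<and> A$1$2 = B$1$2 \<and> A$2$1 = B$2$1 \<and> A$2$2 = B$2$2"
  by (auto simp: vec_eq_iff forall_2)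

lemma qop_mult_nth:
  fixes A B :: qop
  shows "(A ** B) $ i $ j = A$i$1 * B$1$j + A$i$2 * B$2$j"
  by (simp add: matrix_matrix_mult_def sum_2)

definition qmat :: "complex \<Rightarrow> complex \<Rightarrow> complex \<Rightarrow> complex \<Rightarrow> qop" where
  "qmat a b c d = (\<chi> i j. if i = 1 then (if j = 1 then a else b) else (if j = 1 then c else d))"

lemma qmat_nth [simp]:
  "qmat a b c d $ 1 $ 1 = a" "qmat a b c d $ 1 $ 2 = b"
  "qmat a b c d $ 2 $ 1 = c" "qmat a b c d $ 2 $ 2 = d"
  by (simp_all add: qmat_def)

text \<open>The complex instance of \<open>scaleR_conv_of_real\<close>; the general rule would also rewrite
  scalings of whole matrices, which form a real algebra too.\<close>

lemma scaleR_complex: "x *\<^sub>R z = complex_of_real x * z"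
  by (rule scaleR_conv_of_real)

lemma Uop_eq:
  "Uop \<theta> = qmat (- sin \<theta> / 2) ((1 + cos \<theta>) / 2) (- (1 - cos \<theta>) / 2) (sin \<theta> / 2)"
proof -
  have "2 * (cos (\<theta>/2) * cos (\<theta>/2)) = 1 + cos \<theta>" "2 * (sin (\<theta>/2) * sin (\<theta>/2)) = 1 - cos \<theta>"
    "2 * (cos (\<theta>/2) * sin (\<theta>/2)) = sin \<theta>"
    using cos_double_cos[of "\<theta>/2"] cos_double_sin[of "\<theta>/2"] sin_double[of "\<theta>/2"]
    by (simp_all add: power2_eq_square)
  then have "2 * (of_real (cos (\<theta>/2)) * of_real (cos (\<theta>/2))) = 1 + complex_of_real (cos \<theta>)"
    "2 * (of_real (sin (\<theta>/2)) * of_real (sin (\<theta>/2))) = 1 - complex_of_real (cos \<theta>)"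
    "2 * (of_real (cos (\<theta>/2)) * of_real (sin (\<theta>/2))) = complex_of_real (sin \<theta>)"
    by (metis of_real_1 of_real_add of_real_diff of_real_mult of_real_numeral)+
  then show ?thesis
    unfolding qop_eq_iff
    by (simp add: Uop_def qop_mult_nth Rot_def adj_def sigma_plus_def sigma_y_def mat_def
        field_simps)
qed

definition diss_const :: "qop \<Rightarrow> qop" where
  "diss_const r = qmat ((r$2$2 - r$1$1)/4) (-(r$1$2 + r$2$1)/4 - r$1$2/2)
     (-(r$1$2 + r$2$1)/4 - r$2$1/2) ((r$1$1 - r$2$2)/4)"

definition diss_cos :: "qop \<Rightarrow> qop" where
  "diss_cos r = qmat ((r$1$1 + r$2$2)/2) 0 0 (-(r$1$1 + r$2$2)/2)"

definition diss_sin :: "qop \<Rightarrow> qop" where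
  "diss_sin r = qmat 0 ((r$1$1 + r$2$2)/2) ((r$1$1 + r$2$2)/2) 0"

definition diss_cos_sq :: "qop \<Rightarrow> qop" where
  "diss_cos_sq r = qmat ((r$2$2 - r$1$1)/4) ((r$1$2 + r$2$1)/4) ((r$1$2 + r$2$1)/4) ((r$1$1 - r$2$2)/4)"

definition diss_sin_cos :: "qop \<Rightarrow> qop" where
  "diss_sin_cos r = qmat (-(r$1$2 + r$2$1)/4) ((r$2$2 - r$1$1)/4) ((r$2$2 - r$1$1)/4) ((r$1$2 + r$2$1)/4)"

lemma dissipator_Uop:
  "dissipator (Uop \<theta>) r = diss_const r + cos \<theta> *\<^sub>R diss_cos r + sin \<theta> *\<^sub>R diss_sin r
     + (cos \<theta>)\<^sup>2 *\<^sub>R diss_cos_sq r + (sin \<theta> * cos \<theta>) *\<^sub>R diss_sin_cos r"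
proof -
  define C S where "C = complex_of_real (cos \<theta>)" and "S = complex_of_real (sin \<theta>)"
  have pyth: "S\<^sup>2 = 1 - C\<^sup>2"
    unfolding C_def S_def by (simp add: sin_squared_eq flip: of_real_power)
  have [simp]: "cnj C = C" "cnj S = S"
    by (simp_all add: C_def S_def)
  define a b e d where "a = r$1$1" and "b = r$1$2" and "e = r$2$1" and "d = r$2$2"
  show ?thesis
    unfolding qop_eq_iff
    apply (intro conjI)
       apply (simp_all add: Uop_eq dissipator_def qop_mult_nth adj_def diss_const_def diss_cos_def
        diss_sin_def diss_cos_sq_def diss_sin_cos_def scaleR_complex
        flip: C_def S_def a_def b_def e_def d_def)
     apply (simp_all add: field_simps)
     apply (simp_all add: algebra_simps power2_eq_square)
     apply (insert pyth; algebra)+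
    done
qed

lemma lindblad_eq_moments:
  assumes "(p has_integral A0) {-pi..pi}"
    and "((\<lambda>\<theta>. p \<theta> * cos \<theta>) has_integral A1) {-pi..pi}"
    and "((\<lambda>\<theta>. p \<theta> * sin \<theta>) has_integral B1) {-pi..pi}"
    and "((\<lambda>\<theta>. p \<theta> * (cos \<theta>)\<^sup>2) has_integral A2) {-pi..pi}"
    and "((\<lambda>\<theta>. p \<theta> * (sin \<theta> * cos \<theta>)) has_integral B2) {-pi..pi}"
  shows "lindblad p r = A0 *\<^sub>R diss_const r + A1 *\<^sub>R diss_cos r + B1 *\<^sub>R diss_sin r
    + A2 *\<^sub>R diss_cos_sq r + B2 *\<^sub>R diss_sin_cos r"
proof -
  have "((\<lambda>\<theta>. p \<theta> *\<^sub>R diss_const r + (p \<theta> * cos \<theta>) *\<^sub>R diss_cos r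
      + (p \<theta> * sin \<theta>) *\<^sub>R diss_sin r + (p \<theta> * (cos \<theta>)\<^sup>2) *\<^sub>R diss_cos_sq r
      + (p \<theta> * (sin \<theta> * cos \<theta>)) *\<^sub>R diss_sin_cos r) has_integral
      (A0 *\<^sub>R diss_const r + A1 *\<^sub>R diss_cos r + B1 *\<^sub>R diss_sin r
       + A2 *\<^sub>R diss_cos_sq r + B2 *\<^sub>R diss_sin_cos r)) {-pi..pi}"
    by (intro has_integral_add has_integral_scaleR_left assms)
  then show ?thesis
    unfolding lindblad_def by (simp add: dissipator_Uop scaleR_add_right integral_unique)
qed

definition qubit_diag :: "real \<Rightarrow> qop" where
  "qubit_diag f = qmat (of_real f) 0 0 (of_real (1 - f))"

lemma density_matrix_qubit_diag:
  assumes "0 \<le> f" "f \<le> 1"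
  shows "density_matrix (qubit_diag f)"
proof -
  have quad: "cnj z * (complex_of_real g * z) = complex_of_real (g * (cmod z)\<^sup>2)" for z g
    by (metis complex_norm_square mult.commute mult.left_commute of_real_mult)
  have "Re (\<Sum>i\<in>UNIV. cnj (v $ i) * (qubit_diag f *v v) $ i) = f * (cmod (v$1))\<^sup>2 + (1 - f) * (cmod (v$2))\<^sup>2"
    for v :: "complex^2"
    by (simp add: qubit_diag_def sum_2 matrix_vector_mult_def quad del: of_real_diff)
  then show ?thesis
    unfolding density_matrix_def qop_eq_iff
    using assms by (simp add: qubit_diag_def adj_def)
qed

lemma qubit_kernel_equations:
  fixes X0 X1 X2 F a b e d :: complex
  assumes X0: "X0 \<noteq> 0" and X02: "2 * X0 - X2 \<noteq> 0" and X02': "X0 + X2 \<noteq> 0"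
    and F: "(X0 + X2) * (1 - 2 * F) = - 2 * X1"
  shows "((X0 + X2) * (d - a) + 2 * X1 * (a + d) = 0
      \<and> (X2 - 3 * X0) * b + (X2 - X0) * e = 0 \<and> (X2 - X0) * b + (X2 - 3 * X0) * e = 0) \<and> a + d = 1
    \<longleftrightarrow> a = F \<and> b = 0 \<and> e = 0 \<and> d = 1 - F"
proof
  assume eqs: "((X0 + X2) * (d - a) + 2 * X1 * (a + d) = 0
      \<and> (X2 - 3 * X0) * b + (X2 - X0) * e = 0 \<and> (X2 - X0) * b + (X2 - 3 * X0) * e = 0) \<and> a + d = 1"
  then have "(2 * X0 - X2) * (b + e) = 0" "X0 * (b - e) = 0"
    by (auto simp: algebra_simps)
  with X0 X02 have "b = 0" "e = 0"
    by auto
  from eqs have "d = 1 - a" "(X0 + X2) * (d - a) + 2 * X1 * (a + d) = 0"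
    by (simp add: eq_diff_eq add.commute, blast)
  then have "(X0 + X2) * (1 - 2 * a) = - 2 * X1"
    by algebra
  with F have "(X0 + X2) * (1 - 2 * a) = (X0 + X2) * (1 - 2 * F)"
    by simp
  with X02' have "a = F"
    by simp
  with \<open>d = 1 - a\<close> \<open>b = 0\<close> \<open>e = 0\<close> show "a = F \<and> b = 0 \<and> e = 0 \<and> d = 1 - F"
    by simp
next
  assume "a = F \<and> b = 0 \<and> e = 0 \<and> d = 1 - F"
  with F show "((X0 + X2) * (d - a) + 2 * X1 * (a + d) = 0
      \<and> (X2 - 3 * X0) * b + (X2 - X0) * e = 0 \<and> (X2 - X0) * b + (X2 - 3 * X0) * e = 0) \<and> a + d = 1"
    by simp
qed

lemma lindblad_kernel:
  assumes "(p has_integral A0) {-pi..pi}"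
    and "((\<lambda>\<theta>. p \<theta> * cos \<theta>) has_integral A1) {-pi..pi}"
    and "((\<lambda>\<theta>. p \<theta> * sin \<theta>) has_integral 0) {-pi..pi}"
    and "((\<lambda>\<theta>. p \<theta> * (cos \<theta>)\<^sup>2) has_integral A2) {-pi..pi}"
    and "((\<lambda>\<theta>. p \<theta> * (sin \<theta> * cos \<theta>)) has_integral 0) {-pi..pi}"
    and A0: "0 < A0" and A2: "0 \<le> A2" "A2 \<le> A0"
  shows "lindblad p r = 0 \<and> r$1$1 + r$2$2 = 1 \<longleftrightarrow> r = qubit_diag (1/2 + A1 / (A0 + A2))"
proof -
  define f where "f = 1/2 + A1 / (A0 + A2)"
  define a b e d where "a = r$1$1" and "b = r$1$2" and "e = r$2$1" and "d = r$2$2"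
  define X0 X1 X2 where "X0 = complex_of_real A0" and "X1 = complex_of_real A1" and "X2 = complex_of_real A2"
  have "A0 \<noteq> 0" "2 * A0 - A2 \<noteq> 0" "A0 + A2 \<noteq> 0"
    using A0 A2 by simp_all
  then have X: "X0 \<noteq> 0" "2 * X0 - X2 \<noteq> 0" "X0 + X2 \<noteq> 0"
    unfolding X0_def X2_def by (metis of_real_eq_0_iff of_real_mult of_real_numeral of_real_diff of_real_add)+
  have "(A0 + A2) * (1 - 2 * f) = - 2 * A1"
    using A0 A2 by (simp add: f_def field_simps)
  then have F: "(X0 + X2) * (1 - 2 * of_real f) = - 2 * X1"
    unfolding X0_def X1_def X2_def by (metis of_real_1 of_real_add of_real_diff of_real_mult of_real_numeral of_real_minus)
  have entries: "lindblad p r $1$1 = ((X0 + X2) * (d - a) + 2 * X1 * (a + d)) / 4"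
    "lindblad p r $2$2 = - (((X0 + X2) * (d - a) + 2 * X1 * (a + d)) / 4)"
    "lindblad p r $1$2 = ((X2 - 3 * X0) * b + (X2 - X0) * e) / 4"
    "lindblad p r $2$1 = ((X2 - X0) * b + (X2 - 3 * X0) * e) / 4"
    by (simp_all add: lindblad_eq_moments[OF assms(1-5)] diss_const_def diss_cos_def diss_cos_sq_def
        scaleR_complex flip: a_def b_def e_def d_def X0_def X1_def X2_def) (simp_all add: field_simps)
  have "lindblad p r = 0 \<longleftrightarrow> (X0 + X2) * (d - a) + 2 * X1 * (a + d) = 0
      \<and> (X2 - 3 * X0) * b + (X2 - X0) * e = 0 \<and> (X2 - X0) * b + (X2 - 3 * X0) * e = 0"
    unfolding qop_eq_iff entries zero_index by auto
  then have "lindblad p r = 0 \<and> a + d = 1 \<longleftrightarrow> a = of_real f \<and> b = 0 \<and> e = 0 \<and> d = 1 - of_real f"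
    using qubit_kernel_equations[OF X F, of d a b e] by (simp only:)
  then show ?thesis
    unfolding f_def[symmetric] by (simp add: qop_eq_iff qubit_diag_def a_def b_def e_def d_def)
qed

lemma cos_moment_bounds:
  assumes "(p has_integral A0) {-pi..pi}"
    and "((\<lambda>\<theta>. p \<theta> * cos \<theta>) has_integral A1) {-pi..pi}"
    and "((\<lambda>\<theta>. p \<theta> * (cos \<theta>)\<^sup>2) has_integral A2) {-pi..pi}"
    and nonneg: "\<And>\<theta>. \<theta> \<in> {-pi..pi} \<Longrightarrow> 0 \<le> p \<theta>"
  shows "0 \<le> A2" "A2 \<le> A0" "\<bar>2 * A1\<bar> \<le> A0 + A2"
proof -
  show "0 \<le> A2"
    by (rule has_integral_nonneg[OF assms(3)]) (simp add: nonneg)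
  have "0 \<le> A0 - A2"
  proof (rule has_integral_nonneg[OF has_integral_diff[OF assms(1,3)]])
    show "0 \<le> p \<theta> - p \<theta> * (cos \<theta>)\<^sup>2" if "\<theta> \<in> {-pi..pi}" for \<theta>
      using nonneg[OF that] by (simp add: mult_left_le abs_square_le_1)
  qed
  then show "A2 \<le> A0"
    by simp
  have "0 \<le> A0 + A2 + 2 * A1" "0 \<le> A0 + A2 - 2 * A1"
  proof (rule_tac [!] has_integral_nonneg)
    show "((\<lambda>\<theta>. p \<theta> * (1 + cos \<theta>)\<^sup>2) has_integral A0 + A2 + 2 * A1) {-pi..pi}"
      "((\<lambda>\<theta>. p \<theta> * (1 - cos \<theta>)\<^sup>2) has_integral A0 + A2 - 2 * A1) {-pi..pi}"
      using has_integral_add[OF has_integral_add[OF assms(1,3)] has_integral_mult_right[OF assms(2), of 2]]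
        has_integral_diff[OF has_integral_add[OF assms(1,3)] has_integral_mult_right[OF assms(2), of 2]]
      by (simp_all add: power2_eq_square algebra_simps)
  qed (simp_all add: nonneg)
  then show "\<bar>2 * A1\<bar> \<le> A0 + A2"
    by simp
qed

lemma stationary_state_iff_moments:
  assumes "(p has_integral A0) {-pi..pi}"
    and "((\<lambda>\<theta>. p \<theta> * cos \<theta>) has_integral A1) {-pi..pi}"
    and "((\<lambda>\<theta>. p \<theta> * sin \<theta>) has_integral 0) {-pi..pi}"
    and "((\<lambda>\<theta>. p \<theta> * (cos \<theta>)\<^sup>2) has_integral A2) {-pi..pi}"
    and "((\<lambda>\<theta>. p \<theta> * (sin \<theta> * cos \<theta>)) has_integral 0) {-pi..pi}"
    and nonneg: "\<And>\<theta>. \<theta> \<in> {-pi..pi} \<Longrightarrow> 0 \<le> p \<theta>" and "0 < A0"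
  shows "stationary_state p \<rho> \<longleftrightarrow> \<rho> = qubit_diag (1/2 + A1 / (A0 + A2))"
proof -
  note bounds = cos_moment_bounds[OF assms(1,2,4) nonneg]
  note kernel = lindblad_kernel[OF assms(1-5) \<open>0 < A0\<close> bounds(1,2)]
  have "0 \<le> 1/2 + A1 / (A0 + A2)" "1/2 + A1 / (A0 + A2) \<le> 1"
    using bounds \<open>0 < A0\<close> by (auto simp: field_simps abs_le_iff)
  then have "density_matrix (qubit_diag (1/2 + A1 / (A0 + A2)))"
    by (rule density_matrix_qubit_diag)
  then show ?thesis
    unfolding stationary_state_def using kernel[of \<rho>]
    by (auto simp: density_matrix_def)
qed

section \<open>Uniform density\<close>

lemma has_integral_antiderivative:
  assumes "a \<le> b" "\<And>x. (F has_real_derivative f x) (at x)" "F b - F a = I"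
  shows "(f has_integral I) {a..b}"
  using fundamental_theorem_of_calculus[OF assms(1), of F f] assms(2,3)
  by (simp add: has_real_derivative_iff_has_vector_derivative[symmetric] has_field_derivative_at_within)

lemma uniform_density_has_integral:
  assumes "0 < t" "t \<le> pi" "(g has_integral I) {-t..t}"
  shows "((\<lambda>\<theta>. uniform_density t \<theta> * g \<theta>) has_integral I / (2 * t)) {-pi..pi}"
proof -
  have "((\<lambda>\<theta>. if \<theta> \<in> {-t..t} then g \<theta> / (2 * t) else 0) has_integral I / (2 * t)) {-pi..pi}"
    using assms by (subst has_integral_restrict) (auto intro: has_integral_divide)
  then show ?thesis
    by (rule has_integral_eq[rotated]) (auto simp: uniform_density_def)
qed

lemma stationary_state_uniform_density:
  assumes t: "0 < t" "t \<le> pi"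
  shows "stationary_state (uniform_density t) \<rho> \<longleftrightarrow>
    \<rho> = qubit_diag (1/2 + 4 * sin t / (6 * t + sin (2 * t)))"
proof -
  have tt: "-t \<le> t"
    using t by simp
  have i0: "((\<lambda>\<theta>. 1) has_integral 2 * t) {-t..t}"
    by (rule has_integral_antiderivative[OF tt, where F="\<lambda>x. x"]) (auto intro!: derivative_eq_intros)
  have i1: "(cos has_integral 2 * sin t) {-t..t}"
    by (rule has_integral_antiderivative[OF tt, where F=sin]) (auto intro!: derivative_eq_intros)
  have i2: "(sin has_integral 0) {-t..t}"
    by (rule has_integral_antiderivative[OF tt, where F="\<lambda>x. - cos x"]) (auto intro!: derivative_eq_intros)
  have i3: "((\<lambda>\<theta>. (cos \<theta>)\<^sup>2) has_integral t + sin (2 * t) / 2) {-t..t}"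
  proof (rule has_integral_antiderivative[OF tt, where F="\<lambda>x. x/2 + sin (2*x)/4"])
    show "((\<lambda>x. x/2 + sin (2*x)/4) has_real_derivative (cos x)\<^sup>2) (at x)" for x
      using cos_double_cos[of x] by (auto intro!: derivative_eq_intros simp: field_simps)
  qed simp
  have i4: "((\<lambda>\<theta>. sin \<theta> * cos \<theta>) has_integral 0) {-t..t}"
    by (rule has_integral_antiderivative[OF tt, where F="\<lambda>x. (sin x)\<^sup>2 / 2"])
      (auto intro!: derivative_eq_intros)
  have moments: "(uniform_density t has_integral 1) {-pi..pi}"
    "((\<lambda>\<theta>. uniform_density t \<theta> * cos \<theta>) has_integral sin t / t) {-pi..pi}"
    "((\<lambda>\<theta>. uniform_density t \<theta> * sin \<theta>) has_integral 0) {-pi..pi}"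
    "((\<lambda>\<theta>. uniform_density t \<theta> * (cos \<theta>)\<^sup>2) has_integral (t + sin (2 * t) / 2) / (2 * t)) {-pi..pi}"
    "((\<lambda>\<theta>. uniform_density t \<theta> * (sin \<theta> * cos \<theta>)) has_integral 0) {-pi..pi}"
    using uniform_density_has_integral[OF t i0] uniform_density_has_integral[OF t i1]
      uniform_density_has_integral[OF t i2] uniform_density_has_integral[OF t i3]
      uniform_density_has_integral[OF t i4] t
    by simp_all
  have "\<bar>sin (2 * t)\<bar> \<le> 2 * t"
    using abs_sin_x_le_abs_x[of "2 * t"] t by simp
  then have "1/2 + (sin t / t) / (1 + (t + sin (2 * t) / 2) / (2 * t)) = 1/2 + 4 * sin t / (6 * t + sin (2 * t))"
    using t by (simp add: field_simps abs_le_iff)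
  moreover have "0 \<le> uniform_density t \<theta>" for \<theta>
    using t by (simp add: uniform_density_def)
  ultimately show ?thesis
    using stationary_state_iff_moments[OF moments _ zero_less_one] by simp
qed

lemma uniform_fidelity_asymptotics:
  "(\<lambda>t::real. (1/2 + 4 * sin t / (6*t + sin (2*t))) - (1 - t^4/80)) \<in> O[at_right 0](\<lambda>t. t^6)"
  by real_asymp

section \<open>Wallis integrals and the modified Bessel functions\<close>

definition cos_power_integral :: "nat \<Rightarrow> real" where
  "cos_power_integral n = integral {-pi..pi} (\<lambda>\<theta>. cos \<theta> ^ n)"

lemma has_integral_cos_power: "((\<lambda>\<theta>. cos \<theta> ^ n) has_integral cos_power_integral n) {-pi..pi}"
  unfolding cos_power_integral_def
  by (intro integrable_integral integrable_continuous_interval continuous_intros)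

lemma cos_power_integral_0: "cos_power_integral 0 = 2 * pi"
  by (simp add: cos_power_integral_def)

lemma cos_power_integral_1: "cos_power_integral 1 = 0"
proof -
  have "(cos has_integral 0) {-pi..pi}"
    by (rule has_integral_antiderivative[where F=sin]) (auto intro!: derivative_eq_intros)
  then show ?thesis
    using has_integral_cos_power[of 1] by (simp add: has_integral_unique)
qed

lemma cos_power_integral_Suc_Suc:
  "real (n + 2) * cos_power_integral (n + 2) = real (n + 1) * cos_power_integral n"
proof -
  have deriv: "((\<lambda>x. cos x ^ (n + 1) * sin x) has_real_derivative
      real (n + 2) * cos x ^ (n + 2) - real (n + 1) * cos x ^ n) (at x)" for x
  proof -
    have "((\<lambda>x. cos x ^ (n + 1) * sin x) has_real_derivative
        real (n + 1) * cos x ^ n * (- sin x) * sin x + cos x ^ (n + 1) * cos x) (at x)"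
      using DERIV_mult[OF DERIV_power[OF DERIV_cos[of x], of "n + 1"] DERIV_sin[of x]]
      by (simp add: algebra_simps)
    also have "real (n + 1) * cos x ^ n * (- sin x) * sin x + cos x ^ (n + 1) * cos x
        = cos x ^ (n + 2) - real (n + 1) * cos x ^ n * (sin x)\<^sup>2"
      by (simp add: power2_eq_square)
    also have "\<dots> = real (n + 2) * cos x ^ (n + 2) - real (n + 1) * cos x ^ n"
      unfolding sin_squared_eq by (simp add: algebra_simps power_add power2_eq_square)
    finally show ?thesis .
  qed
  have zero: "((\<lambda>\<theta>. real (n + 2) * cos \<theta> ^ (n + 2) - real (n + 1) * cos \<theta> ^ n) has_integral 0) {-pi..pi}"
    by (rule has_integral_antiderivative[OF _ deriv]) simp_all
  have "((\<lambda>\<theta>. real (n + 2) * cos \<theta> ^ (n + 2) - real (n + 1) * cos \<theta> ^ n) has_integral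
      real (n + 2) * cos_power_integral (n + 2) - real (n + 1) * cos_power_integral n) {-pi..pi}"
    by (intro has_integral_diff has_integral_mult_right has_integral_cos_power)
  from has_integral_unique[OF this zero] show ?thesis
    by simp
qed

lemma cos_power_integral_odd: "cos_power_integral (2 * j + 1) = 0"
proof (induction j)
  case 0
  then show ?case
    using cos_power_integral_1 by simp
next
  case (Suc j)
  have "real (2 * j + 3) * cos_power_integral (2 * Suc j + 1) = real (2 * j + 2) * cos_power_integral (2 * j + 1)"
    using cos_power_integral_Suc_Suc[of "2 * j + 1"] by (simp add: numeral_3_eq_3)
  then show ?case
    using Suc.IH by simp
qed

lemma cos_power_integral_even:
  "cos_power_integral (2 * j) = 2 * pi * fact (2 * j) / (4 ^ j * (fact j)\<^sup>2)"
proof -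
  have "4 ^ j * (fact j)\<^sup>2 * cos_power_integral (2 * j) = 2 * pi * fact (2 * j)"
  proof (induction j)
    case 0
    then show ?case
      by (simp add: cos_power_integral_0)
  next
    case (Suc j)
    have rec: "real (2 * j + 2) * cos_power_integral (2 * Suc j) = real (2 * j + 1) * cos_power_integral (2 * j)"
      using cos_power_integral_Suc_Suc[of "2 * j"] by simp
    have "4 ^ Suc j * (fact (Suc j))\<^sup>2 * cos_power_integral (2 * Suc j)
        = 2 * real (j + 1) * 4 ^ j * (fact j)\<^sup>2 * (real (2 * j + 2) * cos_power_integral (2 * Suc j))"
      by (simp add: fact_Suc power2_eq_square algebra_simps)
    also have "\<dots> = 2 * real (j + 1) * real (2 * j + 1) * (4 ^ j * (fact j)\<^sup>2 * cos_power_integral (2 * j))"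
      unfolding rec by (simp add: algebra_simps)
    also have "\<dots> = 2 * pi * fact (2 * Suc j)"
      unfolding Suc by (simp add: fact_Suc algebra_simps)
    finally show ?case .
  qed
  then show ?thesis
    by (simp add: field_simps)
qed

lemma exp_cos_power_integral_sums:
  "(\<lambda>j. k ^ j / fact j * cos_power_integral (j + i)) sums
     integral {-pi..pi} (\<lambda>\<theta>. exp (k * cos \<theta>) * cos \<theta> ^ i)"
proof -
  define f where "f j \<theta> = k ^ j / fact j * cos \<theta> ^ (j + i)" for j \<theta>
  have "norm (f j \<theta>) \<le> \<bar>k\<bar> ^ j / fact j" for j \<theta>
    unfolding f_def by (simp add: abs_mult power_abs divide_right_mono mult_left_le power_le_one)
  moreover have "summable (\<lambda>j. \<bar>k\<bar> ^ j / fact j)"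
    using summable_exp[of "\<bar>k\<bar>"] by (simp add: field_simps)
  ultimately have "uniform_limit {-pi..pi} (\<lambda>n \<theta>. \<Sum>j<n. f j \<theta>) (\<lambda>\<theta>. \<Sum>j. f j \<theta>) sequentially"
    by (rule Weierstrass_m_test)
  moreover have "continuous_on {-pi..pi} (\<lambda>\<theta>. \<Sum>j<n. f j \<theta>)" for n
    unfolding f_def by (intro continuous_intros)
  ultimately obtain I J where I: "\<And>n. ((\<lambda>\<theta>. \<Sum>j<n. f j \<theta>) has_integral I n) {-pi..pi}"
    and J: "((\<lambda>\<theta>. \<Sum>j. f j \<theta>) has_integral J) {-pi..pi}" and lim: "I \<longlonglongrightarrow> J"
    using uniform_limit_integral sequentially_bot by blast
  have I_eq: "I = (\<lambda>n. \<Sum>j<n. k ^ j / fact j * cos_power_integral (j + i))"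
  proof
    fix n
    have "((\<lambda>\<theta>. \<Sum>j<n. f j \<theta>) has_integral (\<Sum>j<n. k ^ j / fact j * cos_power_integral (j + i))) {-pi..pi}"
      unfolding f_def by (intro has_integral_sum has_integral_mult_right has_integral_cos_power) simp
    then show "I n = (\<Sum>j<n. k ^ j / fact j * cos_power_integral (j + i))"
      by (rule has_integral_unique[OF I])
  qed
  have "(\<lambda>j. f j \<theta>) sums (exp (k * cos \<theta>) * cos \<theta> ^ i)" for \<theta>
    using sums_mult2[OF exp_converges[of "k * cos \<theta>"], of "cos \<theta> ^ i"]
    by (simp add: f_def power_mult_distrib power_add divide_inverse mult_ac)
  then have "(\<lambda>\<theta>. \<Sum>j. f j \<theta>) = (\<lambda>\<theta>. exp (k * cos \<theta>) * cos \<theta> ^ i)"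
    by (simp add: sums_iff)
  with J have J_eq: "J = integral {-pi..pi} (\<lambda>\<theta>. exp (k * cos \<theta>) * cos \<theta> ^ i)"
    by (simp add: integral_unique)
  show ?thesis
    using lim unfolding sums_def I_eq J_eq .
qed

lemma sums_pairs: "f sums s \<Longrightarrow> (\<lambda>j. f (2 * j) + f (2 * j + 1)) sums s"
  using sums_group[of f s 2] by (simp add: mult.commute)

lemma bessel_I_0_integral:
  "bessel_I 0 k = integral {-pi..pi} (\<lambda>\<theta>. exp (k * cos \<theta>)) / (2 * pi)"
proof -
  define b where "b j = (k / 2) ^ (2 * j + 0) / (fact j * fact (j + 0))" for j
  have "k ^ (2 * j) / fact (2 * j) * cos_power_integral (2 * j)
      + k ^ (2 * j + 1) / fact (2 * j + 1) * cos_power_integral (2 * j + 1) = 2 * pi * b j" for j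
  proof -
    have "(2::real) ^ (2 * j) = 4 ^ j"
      by (simp add: power_mult)
    then show ?thesis
      unfolding b_def cos_power_integral_even cos_power_integral_odd power_divide
      by (simp add: power2_eq_square)
  qed
  then have "(\<lambda>j. 2 * pi * b j) sums integral {-pi..pi} (\<lambda>\<theta>. exp (k * cos \<theta>))"
    using sums_pairs[OF exp_cos_power_integral_sums[of k 0]] by simp
  from sums_divide[OF this, of "2 * pi"] have "b sums (integral {-pi..pi} (\<lambda>\<theta>. exp (k * cos \<theta>)) / (2 * pi))"
    by simp
  then show ?thesis
    unfolding bessel_I_def b_def by (rule sums_unique[symmetric])
qed

lemma bessel_I_1_sums:
  "(\<lambda>j. (k / 2) ^ (2 * j + 1) / (fact j * fact (j + 1))) sums
     (integral {-pi..pi} (\<lambda>\<theta>. exp (k * cos \<theta>) * cos \<theta>) / (2 * pi))"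
proof -
  define b where "b j = (k / 2) ^ (2 * j + 1) / (fact j * fact (j + 1))" for j
  have "k ^ (2 * j) / fact (2 * j) * cos_power_integral (2 * j + 1)
      + k ^ (2 * j + 1) / fact (2 * j + 1) * cos_power_integral (2 * Suc j) = 2 * pi * b j" for j
  proof -
    have "(2::real) ^ (2 * j + 1) = 2 * 4 ^ j"
      by (simp add: power_mult)
    moreover have "fact (2 * Suc j) = (2 * real j + 2) * (fact (2 * j + 1) :: real)"
      by (simp add: fact_Suc)
    ultimately show ?thesis
      unfolding b_def cos_power_integral_even cos_power_integral_odd power_divide
      by (simp add: fact_Suc power2_eq_square divide_simps)
  qed
  then have "(\<lambda>j. 2 * pi * b j) sums integral {-pi..pi} (\<lambda>\<theta>. exp (k * cos \<theta>) * cos \<theta>)"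
    using sums_pairs[OF exp_cos_power_integral_sums[of k 1]] by simp
  from sums_divide[OF this, of "2 * pi"] have "b sums (integral {-pi..pi} (\<lambda>\<theta>. exp (k * cos \<theta>) * cos \<theta>) / (2 * pi))"
    by simp
  then show ?thesis
    unfolding b_def .
qed

lemma bessel_I_1_integral:
  "bessel_I 1 k = integral {-pi..pi} (\<lambda>\<theta>. exp (k * cos \<theta>) * cos \<theta>) / (2 * pi)"
  unfolding bessel_I_def by (rule sums_unique[symmetric, OF bessel_I_1_sums])

lemma bessel_I_1_pos: "0 < k \<Longrightarrow> 0 < bessel_I 1 k"
  unfolding bessel_I_def by (rule suminf_pos[OF sums_summable[OF bessel_I_1_sums]]) simp

section \<open>Von Mises density\<close>

lemma exp_cos_moments:
  fixes k :: real
  assumes "k \<noteq> 0"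
  defines "J0 \<equiv> integral {-pi..pi} (\<lambda>\<theta>. exp (k * cos \<theta>))"
    and "J1 \<equiv> integral {-pi..pi} (\<lambda>\<theta>. exp (k * cos \<theta>) * cos \<theta>)"
  shows "((\<lambda>\<theta>. exp (k * cos \<theta>)) has_integral J0) {-pi..pi}"
    and "((\<lambda>\<theta>. exp (k * cos \<theta>) * cos \<theta>) has_integral J1) {-pi..pi}"
    and "((\<lambda>\<theta>. exp (k * cos \<theta>) * sin \<theta>) has_integral 0) {-pi..pi}"
    and "((\<lambda>\<theta>. exp (k * cos \<theta>) * (cos \<theta>)\<^sup>2) has_integral J0 - J1 / k) {-pi..pi}"
    and "((\<lambda>\<theta>. exp (k * cos \<theta>) * (sin \<theta> * cos \<theta>)) has_integral 0) {-pi..pi}"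
proof -
  show J0: "((\<lambda>\<theta>. exp (k * cos \<theta>)) has_integral J0) {-pi..pi}"
    and J1: "((\<lambda>\<theta>. exp (k * cos \<theta>) * cos \<theta>) has_integral J1) {-pi..pi}"
    unfolding J0_def J1_def by (intro integrable_integral integrable_continuous_interval continuous_intros)+
  show "((\<lambda>\<theta>. exp (k * cos \<theta>) * sin \<theta>) has_integral 0) {-pi..pi}"
    by (rule has_integral_antiderivative[where F="\<lambda>x. - exp (k * cos x) / k"])
      (use assms in \<open>auto intro!: derivative_eq_intros\<close>)
  show "((\<lambda>\<theta>. exp (k * cos \<theta>) * (sin \<theta> * cos \<theta>)) has_integral 0) {-pi..pi}"
    by (rule has_integral_antiderivative[where F="\<lambda>x. (1 / k - cos x) * exp (k * cos x) / k"])
      (use assms in \<open>auto intro!: derivative_eq_intros simp: field_simps\<close>)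
  have by_parts: "((\<lambda>\<theta>. exp (k * cos \<theta>) * cos \<theta> - k * exp (k * cos \<theta>) + k * (exp (k * cos \<theta>) * (cos \<theta>)\<^sup>2))
      has_integral 0) {-pi..pi}"
  proof (rule has_integral_antiderivative[where F="\<lambda>x. sin x * exp (k * cos x)"])
    fix x :: real
    have "((\<lambda>x. sin x * exp (k * cos x)) has_real_derivative
        cos x * exp (k * cos x) - k * (sin x)\<^sup>2 * exp (k * cos x)) (at x)"
      by (auto intro!: derivative_eq_intros simp: power2_eq_square algebra_simps)
    also have "cos x * exp (k * cos x) - k * (sin x)\<^sup>2 * exp (k * cos x)
        = exp (k * cos x) * cos x - k * exp (k * cos x) + k * (exp (k * cos x) * (cos x)\<^sup>2)"
      unfolding sin_squared_eq by (simp add: algebra_simps)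
    finally show "((\<lambda>x. sin x * exp (k * cos x)) has_real_derivative
        exp (k * cos x) * cos x - k * exp (k * cos x) + k * (exp (k * cos x) * (cos x)\<^sup>2)) (at x)" .
  qed simp_all
  have "((\<lambda>\<theta>. exp (k * cos \<theta>) * (cos \<theta>)\<^sup>2) has_integral (k * J0 - J1) / k) {-pi..pi}"
    using has_integral_divide[OF has_integral_diff[OF has_integral_add[OF by_parts has_integral_mult_right[OF J0, of k]] J1], of k] assms
    by (simp add: algebra_simps)
  then show "((\<lambda>\<theta>. exp (k * cos \<theta>) * (cos \<theta>)\<^sup>2) has_integral J0 - J1 / k) {-pi..pi}"
    using assms by (simp add: diff_divide_distrib)
qed

lemma stationary_state_von_mises_density:
  assumes "0 < s"
  shows "stationary_state (von_mises_density s) \<rho> \<longleftrightarrow>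
    \<rho> = qubit_diag (1/2 + 1 / (2 * bessel_I 0 (1 / s\<^sup>2) / bessel_I 1 (1 / s\<^sup>2) - s\<^sup>2))"
proof -
  define k where "k = 1 / s\<^sup>2"
  have k: "0 < k"
    using assms by (simp add: k_def)
  define J0 J1 where "J0 = integral {-pi..pi} (\<lambda>\<theta>. exp (k * cos \<theta>))"
    and "J1 = integral {-pi..pi} (\<lambda>\<theta>. exp (k * cos \<theta>) * cos \<theta>)"
  note moments = exp_cos_moments[of k, folded J0_def J1_def, OF k[THEN less_imp_neq, symmetric]]
  have I0: "bessel_I 0 k = J0 / (2 * pi)" and I1: "bessel_I 1 k = J1 / (2 * pi)"
    unfolding J0_def J1_def by (rule bessel_I_0_integral bessel_I_1_integral)+
  have J1: "0 < J1"
    using bessel_I_1_pos[OF k] unfolding I1 by (simp add: zero_less_divide_iff)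
  have "0 \<le> J0 - J1 / k"
    by (rule has_integral_nonneg[OF moments(4)]) simp
  moreover have "0 < J1 / k"
    using J1 k by simp
  ultimately have J0: "0 < J0"
    by linarith
  have density: "von_mises_density s = (\<lambda>\<theta>. exp (k * cos \<theta>) / J0)"
    using I0 unfolding von_mises_density_def k_def by simp
  have "((\<lambda>\<theta>. exp (k * cos \<theta>) / J0) has_integral 1) {-pi..pi}"
    "((\<lambda>\<theta>. exp (k * cos \<theta>) / J0 * cos \<theta>) has_integral J1 / J0) {-pi..pi}"
    "((\<lambda>\<theta>. exp (k * cos \<theta>) / J0 * sin \<theta>) has_integral 0) {-pi..pi}"
    "((\<lambda>\<theta>. exp (k * cos \<theta>) / J0 * (cos \<theta>)\<^sup>2) has_integral (J0 - J1 / k) / J0) {-pi..pi}"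
    "((\<lambda>\<theta>. exp (k * cos \<theta>) / J0 * (sin \<theta> * cos \<theta>)) has_integral 0) {-pi..pi}"
    using moments(1-5)[THEN has_integral_divide[of _ _ _ J0]] J0 by simp_all
  from stationary_state_iff_moments[OF this] J0
  have "stationary_state (von_mises_density s) \<rho> \<longleftrightarrow>
      \<rho> = qubit_diag (1/2 + (J1 / J0) / (1 + (J0 - J1 / k) / J0))"
    unfolding density by simp
  also have "(J1 / J0) / (1 + (J0 - J1 / k) / J0) = 1 / (2 * (J0 / (2 * pi)) / (J1 / (2 * pi)) - 1 / k)"
    using J0 J1 k by (simp add: field_simps)
  finally show ?thesis
    unfolding I0[unfolded k_def] I1[unfolded k_def] by (simp add: k_def)
qed

section \<open>Expansion for small \<open>\<sigma>\<close>\<close>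

definition versine_moment :: "real \<Rightarrow> nat \<Rightarrow> real" where
  "versine_moment k j = integral {-pi..pi} (\<lambda>\<theta>. (1 - cos \<theta>) ^ j * exp (- k * (1 - cos \<theta>)))"

lemma has_integral_versine_moment:
  "((\<lambda>\<theta>. (1 - cos \<theta>) ^ j * exp (- k * (1 - cos \<theta>))) has_integral versine_moment k j) {-pi..pi}"
  unfolding versine_moment_def
  by (intro integrable_integral integrable_continuous_interval continuous_intros)

lemma versine_moment_nonneg: "0 \<le> versine_moment k j"
  by (rule has_integral_nonneg[OF has_integral_versine_moment]) simp

lemma versine_derivative_identity:
  fixes U E k :: real
  shows "(1 - U) * (U ^ j * E) + U * (2 - U) * (real j * U ^ (j - 1) - k * U ^ j) * E
    = real (2 * j + 1) * (U ^ j * E) - (real j + 1 + 2 * k) * (U ^ (j + 1) * E) + k * (U ^ (j + 2) * E)"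
  by (cases j) (simp_all add: algebra_simps)

lemma versine_moment_recurrence:
  "real (2 * j + 1) * versine_moment k j - (real j + 1 + 2 * k) * versine_moment k (j + 1)
     + k * versine_moment k (j + 2) = 0"
proof -
  define u where "u x = 1 - cos x" for x :: real
  define g where "g i x = u x ^ i * exp (- k * u x)" for i x
  have deriv: "((\<lambda>x. sin x * g j x) has_real_derivative
      real (2 * j + 1) * g j x - (real j + 1 + 2 * k) * g (j + 1) x + k * g (j + 2) x) (at x)" for x
  proof -
    have "((\<lambda>x. sin x * g j x) has_real_derivative
        cos x * g j x + (sin x)\<^sup>2 * (real j * u x ^ (j - 1) - k * u x ^ j) * exp (- k * u x)) (at x)"
      unfolding g_def u_def
      by (auto intro!: derivative_eq_intros simp: power2_eq_square algebra_simps)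
    moreover have "cos x * g j x + (sin x)\<^sup>2 * (real j * u x ^ (j - 1) - k * u x ^ j) * exp (- k * u x)
        = real (2 * j + 1) * g j x - (real j + 1 + 2 * k) * g (j + 1) x + k * g (j + 2) x"
    proof -
      have "(sin x)\<^sup>2 = u x * (2 - u x)" "cos x = 1 - u x"
        by (simp_all add: u_def sin_squared_eq power2_eq_square algebra_simps)
      then show ?thesis
        unfolding g_def by (simp only: versine_derivative_identity)
    qed
    ultimately show ?thesis
      by simp
  qed
  have "((\<lambda>x. real (2 * j + 1) * g j x - (real j + 1 + 2 * k) * g (j + 1) x + k * g (j + 2) x)
      has_integral 0) {-pi..pi}"
    by (rule has_integral_antiderivative[OF _ deriv]) simp_all
  moreover have "((\<lambda>x. real (2 * j + 1) * g j x - (real j + 1 + 2 * k) * g (j + 1) x + k * g (j + 2) x)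
      has_integral real (2 * j + 1) * versine_moment k j - (real j + 1 + 2 * k) * versine_moment k (j + 1)
        + k * versine_moment k (j + 2)) {-pi..pi}"
    unfolding g_def u_def
    by (intro has_integral_add has_integral_diff has_integral_mult_right has_integral_versine_moment)
  ultimately show ?thesis
    by (rule has_integral_unique[symmetric])
qed

lemma exp_cos_integrals_versine:
  "integral {-pi..pi} (\<lambda>\<theta>. exp (k * cos \<theta>)) = exp k * versine_moment k 0"
  "integral {-pi..pi} (\<lambda>\<theta>. exp (k * cos \<theta>) * cos \<theta>) = exp k * (versine_moment k 0 - versine_moment k 1)"
proof -
  have e: "exp (k * cos \<theta>) = exp k * exp (- k * (1 - cos \<theta>))" for \<theta>
    by (simp add: algebra_simps flip: exp_add)
  have "((\<lambda>\<theta>. exp (k * cos \<theta>)) has_integral exp k * versine_moment k 0) {-pi..pi}"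
    using has_integral_mult_right[OF has_integral_versine_moment[of 0 k], of "exp k"] by (simp add: e)
  then show "integral {-pi..pi} (\<lambda>\<theta>. exp (k * cos \<theta>)) = exp k * versine_moment k 0"
    by (rule integral_unique)
  have "((\<lambda>\<theta>. exp (k * cos \<theta>) * cos \<theta>) has_integral exp k * (versine_moment k 0 - versine_moment k 1)) {-pi..pi}"
    using has_integral_mult_right[OF has_integral_diff[OF has_integral_versine_moment[of 0 k]
        has_integral_versine_moment[of 1 k]], of "exp k"]
    by (simp add: e algebra_simps)
  then show "integral {-pi..pi} (\<lambda>\<theta>. exp (k * cos \<theta>) * cos \<theta>) = exp k * (versine_moment k 0 - versine_moment k 1)"
    by (rule integral_unique)
qed

lemma one_minus_cos_le: "1 - cos x \<le> x\<^sup>2 / 2" for x :: real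
proof -
  have "(sin (x / 2))\<^sup>2 \<le> (x / 2)\<^sup>2"
    using abs_sin_x_le_abs_x[of "x / 2"] by (metis abs_le_square_iff)
  then show ?thesis
    using cos_double_sin[of "x / 2"] by (simp add: power2_eq_square)
qed

lemma sin_ge_cubic:
  fixes y :: real
  assumes "0 \<le> y"
  shows "y - y ^ 3 / 6 \<le> sin y"
proof -
  have "(\<Sum>m<3. sin_coeff m * y ^ m) = y"
    by (simp add: sin_coeff_def lessThan_nat_numeral)
  moreover have "(fact 3 :: real) = 6"
    by (simp add: fact_numeral)
  ultimately have "\<bar>sin y - y\<bar> \<le> y ^ 3 / 6"
    using Maclaurin_sin_bound[of y 3] assms by simp
  then show ?thesis
    unfolding abs_le_iff by linarith
qed

lemma one_minus_cos_ge:
  fixes x :: real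
  assumes "\<bar>x\<bar> \<le> pi"
  shows "x\<^sup>2 / 8 \<le> 1 - cos x"
proof -
  define y where "y = \<bar>x\<bar> / 2"
  have y: "0 \<le> y" "y \<le> 1.6"
    using assms pi_approx(2) by (simp_all add: y_def)
  then have "y * y\<^sup>2 \<le> y * 3"
    using power_mono[OF y(2), of 2] by (intro mult_left_mono) (simp_all add: power2_eq_square)
  then have "y / 2 \<le> sin y"
    using sin_ge_cubic[OF y(1)] by (simp add: power3_eq_cube power2_eq_square)
  then have "(y / 2)\<^sup>2 \<le> (sin y)\<^sup>2"
    using y by (intro power_mono) auto
  moreover have "(sin y)\<^sup>2 = (sin (x / 2))\<^sup>2"
    by (cases "0 \<le> x") (simp_all add: y_def)
  ultimately show ?thesis
    using cos_double_sin[of "x / 2"] by (simp add: y_def power_divide)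
qed

lemma cube_mult_exp_neg_le:
  fixes x :: real
  assumes "0 \<le> x"
  shows "x ^ 3 * exp (- x) \<le> 216 * exp (- x / 2)"
proof -
  have "x / 6 \<le> exp (x / 6)"
    using exp_ge_add_one_self[of "x / 6"] by linarith
  then have "(x / 6) ^ 3 \<le> exp (x / 6) ^ 3"
    using assms by (intro power_mono) auto
  also have "exp (x / 6) ^ 3 = exp (x / 2)"
    by (simp flip: exp_of_nat_mult)
  finally have "x ^ 3 * exp (- x) \<le> 216 * exp (x / 2) * exp (- x)"
    by (intro mult_right_mono) (auto simp: power_divide)
  also have "\<dots> = 216 * exp (- x / 2)"
    by (simp add: mult.assoc flip: exp_add)
  finally show ?thesis .
qed

lemma versine_moment_0_ge:
  assumes s: "0 < s" "s \<le> 1"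
  shows "s \<le> versine_moment (1 / s\<^sup>2) 0"
proof -
  have "((\<lambda>x. if x \<in> {-s..s} then 1 / 2 else 0) has_integral s) {-pi..pi}"
  proof (subst has_integral_restrict)
    show "{-s..s} \<subseteq> {-pi..pi}"
      using s pi_gt3 by auto
    show "((\<lambda>x. 1 / 2) has_integral s) {-s..s}"
      using has_integral_const_real[of "1 / 2 :: real" "-s" s] s by simp
  qed
  moreover have "(if x \<in> {-s..s} then 1 / 2 else 0) \<le> (1 - cos x) ^ 0 * exp (- (1 / s\<^sup>2) * (1 - cos x))" for x
  proof (cases "x \<in> {-s..s}")
    case True
    then have "\<bar>x\<bar> \<le> \<bar>s\<bar>"
      using s by auto
    then have "x\<^sup>2 \<le> s\<^sup>2"
      by (simp add: abs_le_square_iff)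
    then have "(1 - cos x) / s\<^sup>2 \<le> 1 / 2"
      using one_minus_cos_le[of x] s by (simp add: divide_simps)
    then have "exp (- (1 / 2)) \<le> exp (- (1 / s\<^sup>2) * (1 - cos x))"
      by simp
    moreover have "1 / 2 \<le> exp (- (1 / 2 :: real))"
      using exp_ge_add_one_self[of "- (1 / 2)"] by simp
    ultimately have "1 / 2 \<le> exp (- (1 / s\<^sup>2) * (1 - cos x))"
      by linarith
    then show ?thesis
      using True by simp
  qed auto
  ultimately show ?thesis
    by (rule has_integral_le[OF _ has_integral_versine_moment])
qed

lemma versine_cube_le_lorentzian:
  fixes s x :: real
  assumes s: "0 < s" and x: "\<bar>x\<bar> \<le> pi"
  defines "k \<equiv> 1 / s\<^sup>2" and "a \<equiv> 4 * s"
  shows "(1 - cos x) ^ 3 * exp (- k * (1 - cos x)) \<le> 216 * s ^ 6 * (1 / (1 + (x / a)\<^sup>2))"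
proof -
  define u where "u = 1 - cos x"
  have k: "0 < k"
    using s by (simp add: k_def)
  have u: "0 \<le> u" "x\<^sup>2 / 8 \<le> u"
    using one_minus_cos_ge[OF x] by (auto simp: u_def)
  have "(x / a)\<^sup>2 = k * (x\<^sup>2 / 8) / 2"
    using s by (simp add: a_def k_def power_divide field_simps)
  also have "\<dots> \<le> k * u / 2"
    using u k by (intro divide_right_mono mult_left_mono) auto
  finally have "exp (- (k * u) / 2) \<le> exp (- ((x / a)\<^sup>2))"
    by simp
  also have "\<dots> \<le> 1 / (1 + (x / a)\<^sup>2)"
    using exp_ge_add_one_self[of "(x / a)\<^sup>2"]
    by (simp add: exp_minus divide_inverse le_imp_inverse_le add_pos_nonneg)
  finally have gauss: "exp (- (k * u) / 2) \<le> 1 / (1 + (x / a)\<^sup>2)" .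
  have "u ^ 3 * exp (- k * u) = s ^ 6 * ((k * u) ^ 3 * exp (- (k * u)))"
    using s by (simp add: k_def power_mult_distrib field_simps)
  also have "\<dots> \<le> s ^ 6 * (216 * exp (- (k * u) / 2))"
    using cube_mult_exp_neg_le[of "k * u"] k u by (intro mult_left_mono) auto
  also have "\<dots> \<le> s ^ 6 * (216 * (1 / (1 + (x / a)\<^sup>2)))"
    using gauss by (intro mult_left_mono) auto
  finally show ?thesis
    by (simp add: u_def mult_ac)
qed

lemma versine_moment_3_le:
  assumes s: "0 < s"
  shows "versine_moment (1 / s\<^sup>2) 3 \<le> 864 * pi * s ^ 7"
proof -
  define a where "a = 4 * s"
  have a: "0 < a"
    using s by (simp add: a_def)
  have lorentzian: "((\<lambda>x. 216 * s ^ 6 * (1 / (1 + (x / a)\<^sup>2))) has_integral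
      216 * s ^ 6 * (a * arctan (pi / a) - a * arctan (- pi / a))) {-pi..pi}"
    by (intro has_integral_mult_right has_integral_antiderivative[where F="\<lambda>x. a * arctan (x / a)"])
      (use a in \<open>auto intro!: derivative_eq_intros simp: divide_inverse\<close>)
  have "versine_moment (1 / s\<^sup>2) 3 \<le> 216 * s ^ 6 * (a * arctan (pi / a) - a * arctan (- pi / a))"
    by (rule has_integral_le[OF has_integral_versine_moment lorentzian])
      (unfold a_def, rule versine_cube_le_lorentzian[OF s], auto)
  also have "\<dots> \<le> 216 * s ^ 6 * (a * pi)"
  proof -
    have "arctan (pi / a) - arctan (- pi / a) \<le> pi"
      using arctan_ubound[of "pi / a"] arctan_lbound[of "- pi / a"] by linarith
    then show ?thesis
      using a s by (simp add: right_diff_distrib[symmetric] mult_left_mono)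
  qed
  also have "\<dots> = 864 * pi * s ^ 7"
    by (simp add: a_def eval_nat_numeral)
  finally show ?thesis .
qed

lemma versine_moment_1_eq:
  assumes k: "0 < k"
  shows "versine_moment k 1 * (2 * (1 / k)\<^sup>2 + 3 * (1 / k) + 4)
    = (2 * (1 / k)\<^sup>2 + 2 * (1 / k)) * versine_moment k 0 + versine_moment k 3"
proof -
  define m where "m = versine_moment k"
  have R1: "m 0 - (1 + 2 * k) * m 1 + k * m 2 = 0"
    using versine_moment_recurrence[of 0 k] by (simp add: m_def numeral_2_eq_2)
  have R2: "3 * m 1 - (2 + 2 * k) * m 2 + k * m 3 = 0"
    using versine_moment_recurrence[of 1 k] by (simp add: m_def numeral_2_eq_2 numeral_3_eq_3)
  have km: "k * m 2 = (1 + 2 * k) * m 1 - m 0"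
    using R1 by simp
  have "k * (3 * m 1 - (2 + 2 * k) * m 2 + k * m 3) = 0"
    using R2 by simp
  then have "3 * k * m 1 - (2 + 2 * k) * (k * m 2) + k\<^sup>2 * m 3 = 0"
    by (simp add: algebra_simps power2_eq_square)
  then have "3 * k * m 1 - (2 + 2 * k) * ((1 + 2 * k) * m 1 - m 0) + k\<^sup>2 * m 3 = 0"
    unfolding km .
  then have "m 1 * (2 + 3 * k + 4 * k\<^sup>2) = (2 + 2 * k) * m 0 + k\<^sup>2 * m 3"
    by (simp add: algebra_simps power2_eq_square)
  moreover have "m 1 * (2 * (1 / k)\<^sup>2 + 3 * (1 / k) + 4) = m 1 * (2 + 3 * k + 4 * k\<^sup>2) / k\<^sup>2"
    "(2 * (1 / k)\<^sup>2 + 2 * (1 / k)) * m 0 + m 3 = ((2 + 2 * k) * m 0 + k\<^sup>2 * m 3) / k\<^sup>2"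
    using k by (simp_all add: field_simps power2_eq_square)
  ultimately show ?thesis
    unfolding m_def by simp
qed

text \<open>In the next two lemmas t = \<sigma>^2 and a, b, c stand for the versine moments m_0, m_1, m_3;
  the hypothesis on b is the moment recurrence with m_2 eliminated.\<close>

lemma fidelity_error_rational_form:
  fixes a b c t :: real
  assumes a: "0 < a" and c: "0 \<le> c" and t: "0 < t"
    and hb: "b * (2*t^2 + 3*t + 4) = (2*t^2 + 2*t) * a + c" and ne: "0 < a - b"
  shows "1/2 + 1 / (2*a/(a-b) - t) - (1 - 3/16*t^2)
     = (a*(6*t^3 + 9*t^4) + c*(3*t^3 - 8*t - 16)) / (16*(a*(8 + 2*t + 3*t^2) + t*c))"
proof -
  define P Q D where "P = 2*t^2 + 3*t + 4" and "Q = a*(4 + t) - c" and "D = a*(8 + 2*t + 3*t^2) + t*c"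
  have P: "0 < P"
    using t by (simp add: P_def add_pos_pos)
  have PQ: "(a - b) * P = Q"
    using hb unfolding P_def Q_def by (simp add: algebra_simps)
  then have Q: "0 < Q"
    using P ne by (metis mult_pos_pos)
  have D: "0 < D"
    using a c t unfolding D_def by (intro add_pos_nonneg mult_pos_pos) auto
  have "a - b = Q / P"
    using PQ P by (simp add: field_simps)
  then have "2*a/(a-b) - t = 2*a*P/Q - t"
    using P Q by simp
  also have "\<dots> = (2*a*P - t*Q)/Q"
    using Q by (simp add: diff_divide_distrib)
  also have "2*a*P - t*Q = D"
    unfolding P_def Q_def D_def by (simp add: algebra_simps power2_eq_square)
  finally have "1/2 + 1 / (2*a/(a-b) - t) - (1 - 3/16*t^2) = Q/D - 1/2 + 3/16*t^2"
    using Q D by simp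
  also have "\<dots> = (16*Q - 8*D + 3*t^2*D) / (16*D)"
    using D by (simp add: field_simps)
  also have "16*Q - 8*D + 3*t^2*D = a*(6*t^3 + 9*t^4) + c*(3*t^3 - 8*t - 16)"
    unfolding Q_def D_def by (simp add: algebra_simps power2_eq_square power3_eq_cube eval_nat_numeral)
  finally show ?thesis
    unfolding D_def .
qed

lemma fidelity_error_rational_bound:
  fixes a c t K :: real
  assumes a: "0 < a" and c: "0 \<le> c" and t: "0 < t" "t \<le> 1" and cK: "c \<le> K * t^3 * a"
  shows "\<bar>(a*(6*t^3 + 9*t^4) + c*(3*t^3 - 8*t - 16)) / (16*(a*(8 + 2*t + 3*t^2) + t*c))\<bar>
     \<le> (15 + 27*K)/128 * t^3"
proof -
  define N D where "N = a*(6*t^3 + 9*t^4) + c*(3*t^3 - 8*t - 16)" and "D = a*(8 + 2*t + 3*t^2) + t*c"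
  have t4: "t^4 \<le> t^3"
    using t by (simp add: power_decreasing eval_nat_numeral)
  have t3: "t^3 \<le> 1"
    using t by (simp add: power_le_one)
  have "\<bar>N\<bar> \<le> a*(6*t^3 + 9*t^4) + c*(16 + 8*t + 3*t^3)"
    unfolding N_def using a c t
    by (auto simp: abs_le_iff algebra_simps intro!: mult_nonneg_nonneg add_nonneg_nonneg)
  also have "\<dots> \<le> a*(15*t^3) + c*27"
    using a c t t3 t4 by (intro add_mono mult_left_mono) auto
  also have "\<dots> \<le> (15 + 27*K) * t^3 * a"
    using cK by (simp add: algebra_simps)
  finally have N: "\<bar>N\<bar> \<le> (15 + 27*K) * t^3 * a" .
  have D: "128 * a \<le> 16 * D"
    unfolding D_def using a c t by (simp add: algebra_simps add_nonneg_nonneg)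
  have "\<bar>N / (16*D)\<bar> = \<bar>N\<bar> / (16*D)"
    using D a by simp
  also have "\<dots> \<le> ((15 + 27*K) * t^3 * a) / (128 * a)"
    using N D a by (intro frac_le) auto
  also have "\<dots> = (15 + 27*K)/128 * t^3"
    using a by simp
  finally show ?thesis
    unfolding N_def D_def .
qed

lemma von_mises_fidelity_error_le:
  assumes s: "0 < s" "s \<le> 1"
  shows "\<bar>(1/2 + 1 / (2 * bessel_I 0 (1/s^2) / bessel_I 1 (1/s^2) - s^2)) - (1 - 3/16 * s^4)\<bar>
    \<le> (15 + 27 * (864 * pi)) / 128 * s ^ 6"
proof -
  define k t where "k = 1 / s\<^sup>2" and "t = s\<^sup>2"
  define a b c where "a = versine_moment k 0" and "b = versine_moment k 1" and "c = versine_moment k 3"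
  have k: "0 < k" and t: "0 < t" "t \<le> 1" and tk: "t = 1 / k"
    using s by (simp_all add: k_def t_def power_le_one)
  have a: "s \<le> a"
    unfolding a_def k_def by (rule versine_moment_0_ge[OF s])
  have c: "0 \<le> c" "c \<le> 864 * pi * t ^ 3 * a"
  proof -
    show "0 \<le> c"
      unfolding c_def by (rule versine_moment_nonneg)
    have "c \<le> 864 * pi * t ^ 3 * s"
      using versine_moment_3_le[OF s(1)] by (simp add: c_def k_def t_def eval_nat_numeral)
    also have "\<dots> \<le> 864 * pi * t ^ 3 * a"
      using a t by (intro mult_left_mono) auto
    finally show "c \<le> 864 * pi * t ^ 3 * a" .
  qed
  have I0: "bessel_I 0 (1 / s\<^sup>2) = exp k * a / (2 * pi)"
    using bessel_I_0_integral[of k] exp_cos_integrals_versine(1)[of k] by (simp add: k_def a_def)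
  have I1: "bessel_I 1 (1 / s\<^sup>2) = exp k * (a - b) / (2 * pi)"
    using bessel_I_1_integral[of k] exp_cos_integrals_versine(2)[of k] by (simp add: k_def a_def b_def)
  have ab: "0 < a - b"
    using bessel_I_1_pos[OF k] unfolding k_def I1 by (simp add: zero_less_mult_iff zero_less_divide_iff)
  have "2 * bessel_I 0 (1 / s\<^sup>2) / bessel_I 1 (1 / s\<^sup>2) = 2 * a / (a - b)"
    unfolding I0 I1 using ab by simp
  moreover have "s ^ 4 = t\<^sup>2" "s ^ 6 = t ^ 3"
    by (simp_all add: t_def flip: power_mult)
  moreover have "b * (2 * t\<^sup>2 + 3 * t + 4) = (2 * t\<^sup>2 + 2 * t) * a + c"
    unfolding tk a_def b_def c_def by (rule versine_moment_1_eq[OF k])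
  ultimately show ?thesis
    using fidelity_error_rational_form[of a c t b] fidelity_error_rational_bound[of a c t "864 * pi"] a s c t ab
    by (simp add: t_def)
qed

lemma von_mises_fidelity_asymptotics:
  "(\<lambda>s. (1/2 + 1 / (2 * bessel_I 0 (1/s^2) / bessel_I 1 (1/s^2) - s^2)) - (1 - 3/16 * s^4))
     \<in> O[at_right 0](\<lambda>s. s^6)"
proof (rule bigoI)
  have "\<forall>\<^sub>F s in at_right (0::real). 0 < s \<and> s < 1"
    unfolding eventually_at_right_field by (rule exI[of _ 1]) auto
  then show "\<forall>\<^sub>F s in at_right 0. norm ((1/2 + 1 / (2 * bessel_I 0 (1/s^2) / bessel_I 1 (1/s^2) - s^2))
      - (1 - 3/16 * s^4)) \<le> (15 + 27 * (864 * pi)) / 128 * norm (s^6)"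
  proof eventually_elim
    case (elim s)
    then show ?case
      using von_mises_fidelity_error_le[of s] by (simp add: abs_of_pos)
  qed
qed

lemma stationary_state_unique_diag:
  assumes "\<And>\<rho>. stationary_state p \<rho> \<longleftrightarrow> \<rho> = qubit_diag f"
  shows "(\<exists>\<rho>. stationary_state p \<rho>) \<and>
    (\<forall>\<rho>. stationary_state p \<rho> \<longrightarrow> \<rho> $ 1 $ 1 = complex_of_real f \<and> \<rho> $ 1 $ 2 = 0 \<and> \<rho> $ 2 $ 1 = 0)"
  using assms by (simp add: qubit_diag_def)

theorem mainTheorem10:
  shows
  "(\<forall>t. 0 < t \<and> t \<le> pi \<longrightarrow>
      (\<exists>\<rho>. stationary_state (uniform_density t) \<rho>) \<and>
      (\<forall>\<rho>. stationary_state (uniform_density t) \<rho> \<longrightarrow>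
         \<rho> $ 1 $ 1 = complex_of_real (1/2 + 4 * sin t / (6*t + sin (2*t)))
         \<and> \<rho> $ 1 $ 2 = 0 \<and> \<rho> $ 2 $ 1 = 0))
   \<and> (\<lambda>t::real. (1/2 + 4 * sin t / (6*t + sin (2*t))) - (1 - t^4/80)) \<in> O[at_right 0](\<lambda>t. t^6)
   \<and> (\<forall>s. 0 < s \<longrightarrow>
      (\<exists>\<rho>. stationary_state (von_mises_density s) \<rho>) \<and>
      (\<forall>\<rho>. stationary_state (von_mises_density s) \<rho> \<longrightarrow>
         \<rho> $ 1 $ 1 = complex_of_real (1/2 + 1 / (2 * bessel_I 0 (1/s^2) / bessel_I 1 (1/s^2) - s^2))
         \<and> \<rho> $ 1 $ 2 = 0 \<and> \<rho> $ 2 $ 1 = 0))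
   \<and> (\<lambda>s. (1/2 + 1 / (2 * bessel_I 0 (1/s^2) / bessel_I 1 (1/s^2) - s^2)) - (1 - 3/16 * s^4))
        \<in> O[at_right 0](\<lambda>s. s^6)"
  using stationary_state_unique_diag[OF stationary_state_uniform_density]
    stationary_state_unique_diag[OF stationary_state_von_mises_density]
    uniform_fidelity_asymptotics von_mises_fidelity_asymptotics
  by blast

end
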